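(* Let $K\ge1$. Every $L$-layer MinAgg GNN with $L<K$ has nonzero error on the training pair $(H^{(0)}_K,\Gamma^K(H^{(0)}_K))$: there is $w\in\{v_K,u_K\}$ with $h^{(L)}_w(H^{(0)}_K)\ne x_w(\Gamma^K(H^{(0)}_K))$.
   Context: Attributed graphs: $G=(V,E,X_{\mathrm v},X_{\mathrm e})$ with $V$ finite, undirected edges, nonnegative edge weights and nonnegative node features; every node has a self-loop of weight $0$ and $\mathcal N(v)=\{v\}\cup\{u:\{u,v\}\in E\}$. A large constant $\beta>0$ encodes "infinite distance". $x_v(H)$ is the feature of $v$ in $H$. The Bellman–Ford operator $\Gamma$ sends $G$ to the graph with the same vertices, edges and weights and node features $x'_v=\min\{x_u+x_{(u,v)}:u\in\mathcal N(v)\}$; $\Gamma^K$ is its $K$-fold iterate. The graph $H^{(0)}_K$: vertices $v_0,\dots,v_K,u_0,\dots,u_K$; edges $\{v_{i-1},v_i\}$, $\{u_{i-1},u_i\}$, $\{u_{i-1},v_i\}$, $\{v_{i-1},u_i\}$ for $i\in[K]$; weights $1$ on $\{u_{i-1},v_i\}$ and $\{v_{i-1},u_i\}$, $0$ on $\{v_{i-1},v_i\}$ and $\{u_{i-1},u_i\}$; node features $x_{v_0}=0$, $x_w=\beta$ otherwise. MinAgg GNN: for each $\ell\in[L]$, ReLU MLPs ($x^{(j)}=\sigma(W_jx^{(j-1)}+b_j)$) $f^{\mathrm{agg},(\ell)}:\mathbb R^{d_{\ell-1}+1}\to\mathbb R^d$ and $f^{\mathrm{up},(\ell)}:\mathbb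 R^{d+d_{\ell-1}}\to\mathbb R^{d_\ell}$, $d_0=d_L=1$, $d_\ell=d$ otherwise; $h^{(0)}_v=x_v$ and $h^{(\ell)}_v=f^{\mathrm{up},(\ell)}\big(\min_{u\in\mathcal N(v)}f^{\mathrm{agg},(\ell)}(h^{(\ell-1)}_u\oplus x_{(u,v)})\oplus h^{(\ell-1)}_v\big)$ (coordinatewise min, $\oplus$ concatenation). *)

theory Defs
  imports Complex_Main
begin

text \<open>An attributed graph: finite vertex set, undirected edges (as 2-element
sets), nonnegative edge weights, nonnegative scalar node features.
Every node carries an implicit self-loop of weight 0.\<close>

record 'v agraph =
  verts :: "'v set"
  edges :: "'v set set"
  weight :: "'v set \<Rightarrow> real"
  feat :: "'v \<Rightarrow> real"

definition ew :: "('v, 'b) agraph_scheme \<Rightarrow> 'v \<Rightarrow> 'v \<Rightarrow> real" where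
  "ew G u v = (if u = v then 0 else weight G {u, v})"

definition nbhd :: "('v, 'b) agraph_scheme \<Rightarrow> 'v \<Rightarrow> 'v set" where
  "nbhd G v = insert v {u. {u, v} \<in> edges G}"

definition BF :: "('v, 'b) agraph_scheme \<Rightarrow> ('v, 'b) agraph_scheme" where
  "BF G = G\<lparr>feat := (\<lambda>v. Min ((\<lambda>u. feat G u + ew G u v) ` nbhd G v))\<rparr>"

datatype hvert = VV nat | UU nat

definition H0 :: "nat \<Rightarrow> real \<Rightarrow> hvert agraph" where
  "H0 K \<beta> = \<lparr> verts = VV ` {..K} \<union> UU ` {..K},
     edges = (\<Union>i\<in>{1..K}. {{VV (i-1), VV i}, {UU (i-1), UU i},
                            {UU (i-1), VV i}, {VV (i-1), UU i}}),
     weight = (\<lambda>e. if (\<exists>i\<in>{1..K}. e = {UU (i-1), VV i} \<or> e = {VV (i-1), UU i})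
                   then 1 else 0),
     feat = (\<lambda>w. if w = VV 0 then 0 else \<beta>) \<rparr>"

text \<open>A layer is a pair (W, b), W given as a list of rows; a vector is a real list.\<close>
type_synonym mlp = "(real list list \<times> real list) list"

definition relu :: "real \<Rightarrow> real" where
  "relu x = max 0 x"

definition layer_apply :: "real list list \<times> real list \<Rightarrow> real list \<Rightarrow> real list" where
  "layer_apply Wb x = map2 (\<lambda>row bi. relu (sum_list (map2 (*) row x) + bi)) (fst Wb) (snd Wb)"

definition mlp_apply :: "mlp \<Rightarrow> real list \<Rightarrow> real list" where
  "mlp_apply ls x = foldl (\<lambda>y Wb. layer_apply Wb y) x ls"

fun mlp_dims :: "mlp \<Rightarrow> nat \<Rightarrow> nat \<Rightarrow> bool" where
  "mlp_dims [] din dout = (din = dout)"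
| "mlp_dims ((W, b) # ls) din dout =
     (length b = length W \<and> (\<forall>r\<in>set W. length r = din) \<and> mlp_dims ls (length W) dout)"

definition relu_mlp :: "mlp \<Rightarrow> nat \<Rightarrow> nat \<Rightarrow> bool" where
  "relu_mlp ls din dout \<longleftrightarrow> ls \<noteq> [] \<and> mlp_dims ls din dout"

definition gdim :: "nat \<Rightarrow> nat \<Rightarrow> nat \<Rightarrow> nat" where
  "gdim L d l = (if l = 0 \<or> l = L then 1 else d)"

definition minagg_gnn :: "nat \<Rightarrow> nat \<Rightarrow> (nat \<Rightarrow> mlp) \<Rightarrow> (nat \<Rightarrow> mlp) \<Rightarrow> bool" where
  "minagg_gnn L d agg up \<longleftrightarrow>
     (\<forall>l\<in>{1..L}. relu_mlp (agg l) (gdim L d (l - 1) + 1) d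
                \<and> relu_mlp (up l) (d + gdim L d (l - 1)) (gdim L d l))"

fun gnn_h :: "('v, 'b) agraph_scheme \<Rightarrow> nat \<Rightarrow> (nat \<Rightarrow> mlp) \<Rightarrow> (nat \<Rightarrow> mlp)
               \<Rightarrow> nat \<Rightarrow> 'v \<Rightarrow> real list" where
  "gnn_h G d agg up 0 v = [feat G v]"
| "gnn_h G d agg up (Suc l) v =
     mlp_apply (up (Suc l))
       (map (\<lambda>j. Min ((\<lambda>u. mlp_apply (agg (Suc l)) (gnn_h G d agg up l u @ [ew G u v]) ! j)
                        ` nbhd G v)) [0..<d]
        @ gnn_h G d agg up l v)"

end

theory Submission
  imports Defs
begin

text \<open>Swapping the two rails v_i and u_i of H0 preserves all edges and weights and changes
  node features only at level 0. Since information travels one level per layer, a GNN with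
  fewer than K layers, whatever its MLPs, cannot distinguish v_K from u_K. Bellman--Ford,
  however, gives v_K the value 0 along the zero-weight rail of the v_i, whereas reaching u_K
  costs at least min beta 1.\<close>

lemma gnn_h_local_symmetry:
  fixes G :: "('v, 'b) agraph_scheme" and \<sigma> :: "'v \<Rightarrow> 'v" and lev :: "'v \<Rightarrow> nat"
  assumes nbhd_\<sigma>: "\<And>v. nbhd G (\<sigma> v) = \<sigma> ` nbhd G v"
    and ew_\<sigma>: "\<And>u v. ew G (\<sigma> u) (\<sigma> v) = ew G u v"
    and lev_nbhd: "\<And>u v. u \<in> nbhd G v \<Longrightarrow> lev v \<le> lev u + 1"
    and feat_\<sigma>: "\<And>v. 0 < lev v \<Longrightarrow> feat G (\<sigma> v) = feat G v"
  shows "l < lev w \<Longrightarrow> gnn_h G d agg up l (\<sigma> w) = gnn_h G d agg up l w"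
proof (induction l arbitrary: w)
  case 0
  then show ?case using feat_\<sigma> by simp
next
  case (Suc l)
  let ?msg = "\<lambda>w j u. mlp_apply (agg (Suc l)) (gnn_h G d agg up l u @ [ew G u w]) ! j"
  have msgs: "?msg (\<sigma> w) j ` nbhd G (\<sigma> w) = ?msg w j ` nbhd G w" for j
  proof -
    have "?msg (\<sigma> w) j ` nbhd G (\<sigma> w) = (\<lambda>u. ?msg (\<sigma> w) j (\<sigma> u)) ` nbhd G w"
      by (simp add: nbhd_\<sigma> image_image)
    also have "\<dots> = ?msg w j ` nbhd G w"
    proof (rule image_cong[OF refl])
      fix u assume "u \<in> nbhd G w"
      then have "l < lev u" using lev_nbhd Suc.prems by fastforce
      then show "?msg (\<sigma> w) j (\<sigma> u) = ?msg w j u" using Suc.IH by (simp add: ew_\<sigma>)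
    qed
    finally show ?thesis .
  qed
  have "gnn_h G d agg up l (\<sigma> w) = gnn_h G d agg up l w" using Suc by simp
  with msgs show ?case by simp
qed

lemma edges_funpow_BF [simp]: "edges ((BF ^^ k) G) = edges G"
  by (induction k) (simp_all add: BF_def)

lemma weight_funpow_BF [simp]: "weight ((BF ^^ k) G) = weight G"
  by (induction k) (simp_all add: BF_def)

lemma nbhd_funpow_BF [simp]: "nbhd ((BF ^^ k) G) = nbhd G"
  by (simp add: nbhd_def fun_eq_iff)

lemma ew_funpow_BF [simp]: "ew ((BF ^^ k) G) = ew G"
  by (simp add: ew_def fun_eq_iff)

lemma self_in_nbhd: "v \<in> nbhd G v"
  by (simp add: nbhd_def)

lemma feat_BF_le:
  assumes "finite (nbhd G v)" and "u \<in> nbhd G v"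
  shows "feat (BF G) v \<le> feat G u + ew G u v"
  using assms by (simp add: BF_def)

lemma feat_BF_ge:
  assumes "finite (nbhd G v)" and "\<And>u. u \<in> nbhd G v \<Longrightarrow> c \<le> feat G u + ew G u v"
  shows "c \<le> feat (BF G) v"
  unfolding BF_def using assms self_in_nbhd[of v G] by (auto intro!: Min.boundedI)

lemma feat_BF_le_feat:
  assumes "finite (nbhd G v)"
  shows "feat (BF G) v \<le> feat G v"
  using feat_BF_le[OF assms self_in_nbhd] by (simp add: ew_def)

lemma funpow_BF_potential_le:
  assumes fin: "\<And>v. finite (nbhd G v)"
    and feasible: "\<And>u v. u \<in> nbhd G v \<Longrightarrow> p v \<le> p u + ew G u v"
    and init: "\<And>v. p v \<le> feat G v"
  shows "p v \<le> feat ((BF ^^ k) G) v"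
proof (induction k arbitrary: v)
  case 0
  then show ?case using init by simp
next
  case (Suc k)
  show ?case unfolding funpow.simps comp_apply
  proof (rule feat_BF_ge)
    show "finite (nbhd ((BF ^^ k) G) v)" using fin by simp
    fix u assume "u \<in> nbhd ((BF ^^ k) G) v"
    then show "p v \<le> feat ((BF ^^ k) G) u + ew ((BF ^^ k) G) u v"
      using feasible[of u v] Suc.IH[of u] by simp
  qed
qed

fun swap_rail :: "hvert \<Rightarrow> hvert" where
  "swap_rail (VV i) = UU i"
| "swap_rail (UU i) = VV i"

fun level :: "hvert \<Rightarrow> nat" where
  "level (VV i) = i"
| "level (UU i) = i"

lemma swap_rail_swap_rail [simp]: "swap_rail (swap_rail x) = x"
  by (cases x) simp_all

lemma H0_edge_swap_rail:
  "{swap_rail a, swap_rail b} \<in> edges (H0 K \<beta>) \<longleftrightarrow> {a, b} \<in> edges (H0 K \<beta>)"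
proof -
  have "{a, b} \<in> edges (H0 K \<beta>) \<Longrightarrow> {swap_rail a, swap_rail b} \<in> edges (H0 K \<beta>)" for a b
    by (auto simp: H0_def doubleton_eq_iff)
  from this[of a b] this[of "swap_rail a" "swap_rail b"] show ?thesis by auto
qed

lemma H0_ew_swap_rail: "ew (H0 K \<beta>) (swap_rail u) (swap_rail v) = ew (H0 K \<beta>) u v"
  by (cases u; cases v) (auto simp: ew_def H0_def doubleton_eq_iff)

lemma H0_nbhd_swap_rail: "nbhd (H0 K \<beta>) (swap_rail v) = swap_rail ` nbhd (H0 K \<beta>) v"
proof -
  have "{u. {u, swap_rail v} \<in> edges (H0 K \<beta>)} = swap_rail ` {u. {u, v} \<in> edges (H0 K \<beta>)}"
  proof (intro set_eqI iffI)
    fix x assume "x \<in> {u. {u, swap_rail v} \<in> edges (H0 K \<beta>)}"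
    then have "{swap_rail x, v} \<in> edges (H0 K \<beta>)"
      using H0_edge_swap_rail[of "swap_rail x" v] by simp
    then show "x \<in> swap_rail ` {u. {u, v} \<in> edges (H0 K \<beta>)}"
      by (intro image_eqI[of _ _ "swap_rail x"]) simp_all
  qed (auto simp: H0_edge_swap_rail)
  then show ?thesis by (simp add: nbhd_def)
qed

lemma H0_level_nbhd: "u \<in> nbhd (H0 K \<beta>) w \<Longrightarrow> level w \<le> level u + 1"
  by (auto simp: nbhd_def H0_def doubleton_eq_iff)

lemma H0_finite_nbhd: "finite (nbhd (H0 K \<beta>) v)"
proof -
  have "nbhd (H0 K \<beta>) v \<subseteq> insert v (\<Union> (edges (H0 K \<beta>)))"
    by (auto simp: nbhd_def)
  moreover have "finite (\<Union> (edges (H0 K \<beta>)))"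
    by (auto simp: H0_def)
  ultimately show ?thesis by (meson finite_insert finite_subset)
qed

lemma H0_ew_nonneg: "0 \<le> ew (H0 K \<beta>) u v"
  by (simp add: ew_def H0_def)

lemma H0_ew_rail_crossing: "VV i \<in> nbhd (H0 K \<beta>) (UU j) \<Longrightarrow> ew (H0 K \<beta>) (VV i) (UU j) = 1"
  by (auto simp: nbhd_def ew_def H0_def doubleton_eq_iff)

lemma H0_rail_step:
  assumes "1 \<le> j" and "j \<le> K"
  shows "VV (j - 1) \<in> nbhd (H0 K \<beta>) (VV j)" and "ew (H0 K \<beta>) (VV (j - 1)) (VV j) = 0"
  using assms by (auto simp: nbhd_def ew_def H0_def doubleton_eq_iff intro!: bexI[of _ j])

lemma gnn_h_H0_rails_agree:
  assumes "l < K"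
  shows "gnn_h (H0 K \<beta>) d agg up l (UU K) = gnn_h (H0 K \<beta>) d agg up l (VV K)"
proof -
  have "feat (H0 K \<beta>) (swap_rail v) = feat (H0 K \<beta>) v" if "0 < level v" for v
    using that by (cases v) (simp_all add: H0_def)
  then have "gnn_h (H0 K \<beta>) d agg up l (swap_rail (VV K)) = gnn_h (H0 K \<beta>) d agg up l (VV K)"
    using assms by (intro gnn_h_local_symmetry[where lev = level])
      (auto simp: H0_nbhd_swap_rail H0_ew_swap_rail dest: H0_level_nbhd)
  then show ?thesis by simp
qed

lemma H0_BF_rail_nonpos:
  "j \<le> k \<Longrightarrow> j \<le> K \<Longrightarrow> feat ((BF ^^ k) (H0 K \<beta>)) (VV j) \<le> 0"
proof (induction k arbitrary: j)
  case 0
  then show ?case by (simp add: H0_def)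
next
  case (Suc k)
  let ?G = "(BF ^^ k) (H0 K \<beta>)"
  have fin: "finite (nbhd ?G (VV j))" by (simp add: H0_finite_nbhd)
  show ?case
  proof (cases j)
    case 0
    then have "feat (BF ?G) (VV j) \<le> feat ?G (VV 0)" using feat_BF_le_feat[OF fin] by simp
    also have "\<dots> \<le> 0" using Suc.IH by simp
    finally show ?thesis by simp
  next
    case (Suc i)
    then have step: "VV i \<in> nbhd ?G (VV j)" "ew ?G (VV i) (VV j) = 0"
      using H0_rail_step[of j K \<beta>] Suc.prems by simp_all
    then have "feat (BF ?G) (VV j) \<le> feat ?G (VV i)" using feat_BF_le[OF fin step(1)] by simp
    also have "\<dots> \<le> 0" using Suc Suc.IH[of i] Suc.prems by simp
    finally show ?thesis by simp
  qed
qed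

lemma H0_BF_other_rail_lower:
  assumes "0 < \<beta>"
  shows "min \<beta> 1 \<le> feat ((BF ^^ k) (H0 K \<beta>)) (UU j)"
proof -
  define p where "p w = (case w of VV _ \<Rightarrow> 0 | UU _ \<Rightarrow> min \<beta> 1)" for w
  have "p v \<le> p u + ew (H0 K \<beta>) u v" if "u \<in> nbhd (H0 K \<beta>) v" for u v
    using that assms H0_ew_nonneg[of K \<beta> u v] H0_ew_rail_crossing
    by (cases u; cases v) (auto simp: p_def)
  moreover have "p v \<le> feat (H0 K \<beta>) v" for v
    using assms by (cases v) (auto simp: p_def H0_def)
  ultimately have "p (UU j) \<le> feat ((BF ^^ k) (H0 K \<beta>)) (UU j)"
    using funpow_BF_potential_le H0_finite_nbhd by metis
  then show ?thesis by (simp add: p_def)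
qed

theorem mainTheorem8:
  fixes K L d :: nat and \<beta> :: real and agg up :: "nat \<Rightarrow> mlp"
  assumes "K \<ge> 1" and "\<beta> > 0" and "1 \<le> L" and "L < K"
    and "minagg_gnn L d agg up"
  shows "\<exists>w\<in>{VV K, UU K}.
           gnn_h (H0 K \<beta>) d agg up L w \<noteq> [feat ((BF ^^ K) (H0 K \<beta>)) w]"
proof (rule ccontr)
  let ?x = "feat ((BF ^^ K) (H0 K \<beta>))"
  assume "\<not> ?thesis"
  then have "[?x (UU K)] = [?x (VV K)]"
    using gnn_h_H0_rails_agree[OF \<open>L < K\<close>] by auto
  moreover have "?x (VV K) \<le> 0" by (rule H0_BF_rail_nonpos) simp_all
  moreover have "min \<beta> 1 \<le> ?x (UU K)" using H0_BF_other_rail_lower \<open>\<beta> > 0\<close> .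
  ultimately show False using \<open>\<beta> > 0\<close> by simp
qed

end
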